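(* Let $G$ be a graph on at least two vertices and let $\overline{G}$ be its complement. Then $|\gamma^{DLD}(G)-\gamma^{DLD}(\overline{G})|\le 1$, and $\gamma^{DLD}(G)\ne\gamma^{DLD}(\overline{G})$ if and only if $G$ is a complete graph or an edgeless graph.
   Context: All graphs are finite, simple and undirected (not necessarily connected). For $u\in V$, $N(u)$ is the set of neighbours of $u$ and $N[u]=N(u)\cup\{u\}$. A code is a non-empty subset $C\subseteq V$; $I(C;u)=N[u]\cap C$ (computed in the relevant graph). A code $C$ is solid-locating-dominating if $I(C;u)\ne\emptyset$ for every $u\in V\setminus C$ and $I(C;u)\not\subseteq I(C;v)$ for all distinct $u,v\in V\setminus C$; $\gamma^{DLD}(G)$ is the minimum size of such a code in $G$. *)

theory Defs
  imports Main
begin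

definition simple_graph :: "'a set \<Rightarrow> ('a \<Rightarrow> 'a \<Rightarrow> bool) \<Rightarrow> bool" where
  "simple_graph V E \<longleftrightarrow> finite V \<and> (\<forall>u v. E u v \<longrightarrow> u \<in> V \<and> v \<in> V)
     \<and> (\<forall>u v. E u v \<longrightarrow> E v u) \<and> (\<forall>u. \<not> E u u)"

definition complement :: "'a set \<Rightarrow> ('a \<Rightarrow> 'a \<Rightarrow> bool) \<Rightarrow> ('a \<Rightarrow> 'a \<Rightarrow> bool)" where
  "complement V E = (\<lambda>u v. u \<in> V \<and> v \<in> V \<and> u \<noteq> v \<and> \<not> E u v)"

definition closed_nbhd :: "'a set \<Rightarrow> ('a \<Rightarrow> 'a \<Rightarrow> bool) \<Rightarrow> 'a \<Rightarrow> 'a set" where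
  "closed_nbhd V E u = {v \<in> V. E u v} \<union> {u}"

definition I_set :: "'a set \<Rightarrow> ('a \<Rightarrow> 'a \<Rightarrow> bool) \<Rightarrow> 'a set \<Rightarrow> 'a \<Rightarrow> 'a set" where
  "I_set V E C u = closed_nbhd V E u \<inter> C"

definition is_DLD_code :: "'a set \<Rightarrow> ('a \<Rightarrow> 'a \<Rightarrow> bool) \<Rightarrow> 'a set \<Rightarrow> bool" where
  "is_DLD_code V E C \<longleftrightarrow> C \<noteq> {} \<and> C \<subseteq> V
     \<and> (\<forall>u \<in> V - C. I_set V E C u \<noteq> {})
     \<and> (\<forall>u \<in> V - C. \<forall>v \<in> V - C. u \<noteq> v \<longrightarrow> \<not> (I_set V E C u \<subseteq> I_set V E C v))"

definition gamma_DLD :: "'a set \<Rightarrow> ('a \<Rightarrow> 'a \<Rightarrow> bool) \<Rightarrow> nat" where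
  "gamma_DLD V E = (LEAST k. \<exists>C. is_DLD_code V E C \<and> card C = k)"

definition is_complete :: "'a set \<Rightarrow> ('a \<Rightarrow> 'a \<Rightarrow> bool) \<Rightarrow> bool" where
  "is_complete V E \<longleftrightarrow> (\<forall>u\<in>V. \<forall>v\<in>V. u \<noteq> v \<longrightarrow> E u v)"

definition is_edgeless :: "'a set \<Rightarrow> ('a \<Rightarrow> 'a \<Rightarrow> bool) \<Rightarrow> bool" where
  "is_edgeless V E \<longleftrightarrow> (\<forall>u\<in>V. \<forall>v\<in>V. \<not> E u v)"

end

theory Submission
  imports Defs
begin

text \<open>Outside a code \<open>C\<close>, the trace of a vertex in the complement is the complement within
\<open>C\<close> of its trace in \<open>G\<close>, and complementation reverses inclusions. Hence a code that misses
at least two vertices is solid-locating-dominating in \<open>G\<close> iff it is so in the complement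
(the second missed vertex rules out a trace equal to all of \<open>C\<close>), and the two parameters
agree as soon as one of them is at most \<open>n - 2\<close>. Otherwise both lie in \<open>{n - 1, n}\<close>. A
code other than \<open>V\<close> misses a vertex, which then has a neighbour, while \<open>V - {u}\<close> is a code
whenever \<open>u\<close> has a neighbour; so the parameter of \<open>G\<close> equals \<open>n\<close> exactly when \<open>G\<close> is
edgeless, and that of the complement exactly when \<open>G\<close> is complete.\<close>

lemma simple_graph_complement:
  assumes "simple_graph V E"
  shows "simple_graph V (complement V E)"
  using assms unfolding simple_graph_def complement_def by auto

lemma complement_complement:
  assumes "simple_graph V E"
  shows "complement V (complement V E) = E"
  using assms unfolding simple_graph_def complement_def by (intro ext) blast

lemma is_edgeless_complement_iff: "is_edgeless V (complement V E) \<longleftrightarrow> is_complete V E"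
  unfolding is_edgeless_def is_complete_def complement_def by blast

lemma two_le_card_obtain_other:
  assumes "2 \<le> card A" "u \<in> A"
  obtains v where "v \<in> A" "v \<noteq> u"
proof -
  have "card (A - {u}) \<noteq> 0" using assms card_Diff_singleton[of u A] by simp
  then have "A - {u} \<noteq> {}" by (metis card.empty)
  then show ?thesis using that by blast
qed

lemma not_complete_and_edgeless:
  assumes "card V \<ge> 2"
  shows "\<not> (is_complete V E \<and> is_edgeless V E)"
proof -
  obtain u where "u \<in> V" using assms by fastforce
  moreover obtain v where "v \<in> V" "v \<noteq> u" using two_le_card_obtain_other[OF assms \<open>u \<in> V\<close>] .
  ultimately show ?thesis unfolding is_complete_def is_edgeless_def by blast
qed

lemma I_set_subset: "I_set V E C u \<subseteq> C"
  unfolding I_set_def by blast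

lemma I_set_complement:
  assumes "C \<subseteq> V" "u \<in> V - C"
  shows "I_set V (complement V E) C u = C - I_set V E C u"
  using assms unfolding I_set_def closed_nbhd_def complement_def by auto

lemma is_DLD_code_complement:
  assumes code: "is_DLD_code V E C" and two_missed: "card (V - C) \<ge> 2"
  shows "is_DLD_code V (complement V E) C"
proof -
  have C: "C \<noteq> {}" "C \<subseteq> V" using code unfolding is_DLD_code_def by auto
  have separating: "\<not> I_set V E C u \<subseteq> I_set V E C v"
    if "u \<in> V - C" "v \<in> V - C" "u \<noteq> v" for u v
    using code that unfolding is_DLD_code_def by blast
  have "I_set V (complement V E) C u \<noteq> {}" if u: "u \<in> V - C" for u
  proof -
    obtain v where v: "v \<in> V - C" "v \<noteq> u"
      using two_le_card_obtain_other[OF two_missed u] .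
    have "I_set V E C u \<noteq> C"
      using separating[OF v(1) u v(2)] I_set_subset[of V E C v] by blast
    then show ?thesis using I_set_complement[OF C(2) u] I_set_subset[of V E C u] by blast
  qed
  moreover have "\<not> I_set V (complement V E) C u \<subseteq> I_set V (complement V E) C v"
    if "u \<in> V - C" "v \<in> V - C" "u \<noteq> v" for u v
    using separating[OF that(2,1) that(3)[symmetric]] I_set_complement[OF C(2) that(1)] I_set_complement[OF C(2) that(2)]
      I_set_subset[of V E C u] I_set_subset[of V E C v] by blast
  ultimately show ?thesis using C unfolding is_DLD_code_def by blast
qed

lemma is_DLD_code_vertex_set: "V \<noteq> {} \<Longrightarrow> is_DLD_code V E V"
  unfolding is_DLD_code_def by blast

lemma is_DLD_code_remove_vertex:
  assumes "u \<in> V" "v \<in> V" "u \<noteq> v" "E u v"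
  shows "is_DLD_code V E (V - {u})"
proof -
  have "V - (V - {u}) = {u}" using assms(1) by blast
  moreover have "v \<in> I_set V E (V - {u}) u"
    using assms unfolding I_set_def closed_nbhd_def by blast
  ultimately show ?thesis using assms unfolding is_DLD_code_def by blast
qed

lemma gamma_DLD_le: "is_DLD_code V E C \<Longrightarrow> gamma_DLD V E \<le> card C"
  unfolding gamma_DLD_def by (rule Least_le) blast

lemma gamma_DLD_le_card: "V \<noteq> {} \<Longrightarrow> gamma_DLD V E \<le> card V"
  by (rule gamma_DLD_le[OF is_DLD_code_vertex_set])

lemma gamma_DLD_attained:
  assumes "V \<noteq> {}"
  obtains C where "is_DLD_code V E C" "card C = gamma_DLD V E"
proof -
  have "\<exists>C. is_DLD_code V E C \<and> card C = card V"
    using is_DLD_code_vertex_set[OF assms] by blast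
  then have "\<exists>C. is_DLD_code V E C \<and> card C = gamma_DLD V E"
    unfolding gamma_DLD_def by (rule LeastI)
  then show ?thesis using that by blast
qed

lemma gamma_DLD_less_card_iff:
  assumes G: "simple_graph V E"
  shows "gamma_DLD V E < card V \<longleftrightarrow> \<not> is_edgeless V E"
proof
  assume less: "gamma_DLD V E < card V"
  then have "V \<noteq> {}" by auto
  then obtain C where C: "is_DLD_code V E C" "card C = gamma_DLD V E"
    by (rule gamma_DLD_attained)
  have "C \<subseteq> V" using C(1) unfolding is_DLD_code_def by blast
  moreover have "C \<noteq> V" using less C(2) by auto
  ultimately obtain u where u: "u \<in> V - C" by blast
  then obtain v where "v \<in> I_set V E C u" using C(1) unfolding is_DLD_code_def by blast
  with u \<open>C \<subseteq> V\<close> have "v \<in> V" "E u v" unfolding I_set_def closed_nbhd_def by auto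
  with u show "\<not> is_edgeless V E" unfolding is_edgeless_def by blast
next
  assume "\<not> is_edgeless V E"
  then obtain u v where uv: "u \<in> V" "v \<in> V" "E u v" unfolding is_edgeless_def by blast
  moreover have "u \<noteq> v" using G uv(3) unfolding simple_graph_def by blast
  ultimately have "gamma_DLD V E \<le> card (V - {u})"
    by (intro gamma_DLD_le is_DLD_code_remove_vertex)
  also have "card (V - {u}) < card V"
    using G uv(1) unfolding simple_graph_def by (blast intro: card_Diff1_less)
  finally show "gamma_DLD V E < card V" .
qed

lemma gamma_DLD_complement_le:
  assumes "finite V" "V \<noteq> {}" and small: "gamma_DLD V E \<le> card V - 2"
  shows "gamma_DLD V (complement V E) \<le> gamma_DLD V E"
proof -
  obtain C where C: "is_DLD_code V E C" "card C = gamma_DLD V E"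
    using assms(2) by (rule gamma_DLD_attained)
  have "C \<subseteq> V" "C \<noteq> {}" using C(1) unfolding is_DLD_code_def by blast+
  moreover have "finite C" using \<open>C \<subseteq> V\<close> assms(1) by (rule finite_subset)
  ultimately have "card (V - C) = card V - card C" "card C > 0"
    by (simp_all add: card_Diff_subset card_gt_0_iff)
  then have "card (V - C) \<ge> 2" using small C(2) by linarith
  then have "gamma_DLD V (complement V E) \<le> card C"
    by (intro gamma_DLD_le is_DLD_code_complement C(1))
  then show ?thesis using C(2) by simp
qed

lemma gamma_DLD_complement_eq:
  assumes G: "simple_graph V E" and "V \<noteq> {}"
    and small: "gamma_DLD V E \<le> card V - 2 \<or> gamma_DLD V (complement V E) \<le> card V - 2"
  shows "gamma_DLD V (complement V E) = gamma_DLD V E"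
proof -
  have "finite V" using G unfolding simple_graph_def by blast
  note le = gamma_DLD_complement_le[OF this \<open>V \<noteq> {}\<close>]
  show ?thesis
    using small le[of E] le[of "complement V E"] unfolding complement_complement[OF G] by linarith
qed

theorem mainTheorem9:
  fixes V :: "'a set" and E :: "'a \<Rightarrow> 'a \<Rightarrow> bool"
  assumes "simple_graph V E" and "card V \<ge> 2"
  shows "\<bar>int (gamma_DLD V E) - int (gamma_DLD V (complement V E))\<bar> \<le> 1
     \<and> (gamma_DLD V E \<noteq> gamma_DLD V (complement V E)
          \<longleftrightarrow> is_complete V E \<or> is_edgeless V E)"
proof -
  let ?n = "card V" and ?g = "gamma_DLD V E" and ?h = "gamma_DLD V (complement V E)"
  have "V \<noteq> {}" using assms(2) by auto
  then have "?g \<le> ?n" "?h \<le> ?n" by (simp_all add: gamma_DLD_le_card)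
  moreover have "is_edgeless V E \<longleftrightarrow> ?g = ?n"
    using gamma_DLD_less_card_iff[OF assms(1)] \<open>?g \<le> ?n\<close> by linarith
  moreover have "is_complete V E \<longleftrightarrow> ?h = ?n"
    using gamma_DLD_less_card_iff[OF simple_graph_complement[OF assms(1)]] \<open>?h \<le> ?n\<close>
    unfolding is_edgeless_complement_iff by linarith
  moreover have "?g \<le> ?n - 2 \<or> ?h \<le> ?n - 2 \<Longrightarrow> ?h = ?g"
    using gamma_DLD_complement_eq[OF assms(1) \<open>V \<noteq> {}\<close>] by blast
  ultimately show ?thesis
    using not_complete_and_edgeless[OF assms(2), of E] assms(2) by linarith
qed

end
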